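(* Let $\Sigma\in\mathbb{R}^{J\times J}$ be symmetric positive definite, let $\gamma_1>0$, $\gamma_2>0$, and fix $y\in\mathbb{R}^J$. Define the ambiguity sets \[ \mathcal{D}_{\tilde s}=\Bigl\{\mathbb{P}\in\mathcal{P}(\mathbb{R}^J):\ \mathbb{E}_{\mathbb{P}}[\tilde s]^{\top}\Sigma^{-1}\mathbb{E}_{\mathbb{P}}[\tilde s]\le\gamma_1,\ \ \mathbb{E}_{\mathbb{P}}[\tilde s\tilde s^{\top}]\preceq\gamma_2\Sigma\Bigr\} \] for a random vector $\tilde s$ in $\mathbb{R}^J$, and \[ \mathcal{D}_{\tilde\xi}=\Bigl\{\mathbb{P}\in\mathcal{P}(\mathbb{R}):\ |\mathbb{E}_{\mathbb{P}}[\tilde\xi]|\le\sqrt{\gamma_1}\sqrt{y^{\top}\Sigma y},\ \ \mathbb{E}_{\mathbb{P}}[\tilde\xi^2]\le\gamma_2\,(y^{\top}\Sigma y)\Bigr\} \] for a random variable $\tilde\xi$ in $\mathbb{R}$. Then for every Borel measurable function $f:\mathbb{R}\to\mathbb{R}$, \[ \inf_{\mathbb{P}\in\mathcal{D}_{\tilde s}}\mathbb{P}\{f(y^{\top}\tilde s)\le 0\}\ =\ \inf_{\mathbb{P}\in\mathcal{D}_{\tilde\xi}}\mathbb{P}\{f(\tilde\xi)\le 0\}. \]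
   Context: $\mathcal{P}(\mathbb{R}^n)$ denotes the set of all probability distributions on $\mathbb{R}^n$ (for which the relevant first and second moments exist); in $\mathcal{D}_{\tilde s}$, $\tilde s$ is distributed according to $\mathbb{P}$, and in $\mathcal{D}_{\tilde\xi}$, $\tilde\xi$ is distributed according to $\mathbb{P}$. $A\preceq B$ means $B-A$ is positive semidefinite. *)

theory Defs
  imports "HOL-Probability.Probability"
begin

definition sym_pd :: "real^'n^'n \<Rightarrow> bool" where
  "sym_pd S \<longleftrightarrow> transpose S = S \<and> (\<forall>v. v \<noteq> 0 \<longrightarrow> v \<bullet> (S *v v) > 0)"

definition loewner_le :: "real^'n^'n \<Rightarrow> real^'n^'n \<Rightarrow> bool" where
  "loewner_le A B \<longleftrightarrow> (\<forall>v. v \<bullet> ((B - A) *v v) \<ge> 0)"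

definition mean_vec :: "(real^'n) measure \<Rightarrow> real^'n" where
  "mean_vec M = (\<chi> i. integral\<^sup>L M (\<lambda>x. x $ i))"

definition second_moment :: "(real^'n) measure \<Rightarrow> real^'n^'n" where
  "second_moment M = (\<chi> i j. integral\<^sup>L M (\<lambda>x. x $ i * x $ j))"

definition prob_dists_vec :: "(real^'n) measure set" where
  "prob_dists_vec = {M. prob_space M \<and> sets M = sets borel \<and>
      (\<forall>i. integrable M (\<lambda>x. x $ i)) \<and> (\<forall>i j. integrable M (\<lambda>x. x $ i * x $ j))}"

definition prob_dists_real :: "real measure set" where
  "prob_dists_real = {M. prob_space M \<and> sets M = sets borel \<and>
      integrable M (\<lambda>x. x) \<and> integrable M (\<lambda>x. x ^ 2)}"

definition D_s :: "real^'n^'n \<Rightarrow> real \<Rightarrow> real \<Rightarrow> (real^'n) measure set" where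
  "D_s S g1 g2 = {M \<in> prob_dists_vec.
      mean_vec M \<bullet> (matrix_inv S *v mean_vec M) \<le> g1 \<and>
      loewner_le (second_moment M) (g2 *\<^sub>R S)}"

definition D_xi :: "real^'n^'n \<Rightarrow> real \<Rightarrow> real \<Rightarrow> real^'n \<Rightarrow> real measure set" where
  "D_xi S g1 g2 y = {M \<in> prob_dists_real.
      \<bar>integral\<^sup>L M (\<lambda>x. x)\<bar> \<le> sqrt g1 * sqrt (y \<bullet> (S *v y)) \<and>
      integral\<^sup>L M (\<lambda>x. x ^ 2) \<le> g2 * (y \<bullet> (S *v y))}"

end

theory Submission
  imports Defs
begin

text \<open>
  Both infima range over the same set of values. Pushing \<open>P \<in> D_s\<close> forward along
  \<open>s \<mapsto> y \<bullet> s\<close> gives a law in \<open>D_xi\<close>: its mean is \<open>y \<bullet> m\<close>, bounded via the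
  Cauchy--Schwarz inequality for the inner product \<open>\<langle>a, b\<rangle> = a \<bullet> S b\<close> applied to
  \<open>y\<close> and \<open>S\<^sup>-\<^sup>1 m\<close>, and its second moment is \<open>y \<bullet> E[s s\<^sup>T] y \<le> \<gamma>\<^sub>2 y \<bullet> S y\<close>.
  Conversely, a law of \<open>\<xi>\<close> in \<open>D_xi\<close> is pushed forward along \<open>x \<mapsto> x u\<close> with
  \<open>u = S y / (y \<bullet> S y)\<close>; then \<open>y \<bullet> (x u) = x\<close>, the mean is \<open>E[\<xi>] u\<close> and the second
  moment is the rank-one matrix \<open>E[\<xi>\<^sup>2] u u\<^sup>T\<close>, which is below \<open>\<gamma>\<^sub>2 S\<close> by
  Cauchy--Schwarz again. In both directions the probability of the event is preserved.
\<close>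

lemma sym_pd_quadratic_form_nonneg:
  fixes S :: "real^'n^'n"
  assumes "sym_pd S"
  shows "0 \<le> v \<bullet> (S *v v)"
  using assms unfolding sym_pd_def by (cases "v = 0") (auto intro: less_imp_le)

lemma sym_pd_quadratic_form_eq_0_iff:
  fixes S :: "real^'n^'n"
  assumes "sym_pd S"
  shows "v \<bullet> (S *v v) = 0 \<longleftrightarrow> v = 0"
  using assms unfolding sym_pd_def by force

lemma bilinear_form_commute:
  fixes S :: "real^'n^'n"
  assumes "transpose S = S"
  shows "a \<bullet> (S *v b) = b \<bullet> (S *v a)"
proof -
  have "a \<bullet> (S *v b) = (transpose S *v a) \<bullet> b"
    by (simp add: dot_lmul_matrix)
  then show ?thesis
    using assms by (simp add: inner_commute)
qed

lemma sym_pd_cauchy_schwarz: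
  fixes S :: "real^'n^'n"
  assumes "sym_pd S"
  shows "(a \<bullet> (S *v b))\<^sup>2 \<le> (a \<bullet> (S *v a)) * (b \<bullet> (S *v b))"
proof (cases "b = 0")
  case True
  then show ?thesis by simp
next
  case False
  define B where "B = b \<bullet> (S *v b)"
  have B: "B > 0"
    using False assms sym_pd_quadratic_form_eq_0_iff sym_pd_quadratic_form_nonneg
    unfolding B_def by (metis less_le)
  have sym: "transpose S = S"
    using assms unfolding sym_pd_def by simp
  \<comment> \<open>evaluate the nonnegative form at the minimiser \<open>a + t b\<close> of \<open>t \<mapsto> \<langle>a + t b, a + t b\<rangle>\<close>\<close>
  define t where "t = - (a \<bullet> (S *v b)) / B"
  have "0 \<le> (a + t *\<^sub>R b) \<bullet> (S *v (a + t *\<^sub>R b))"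
    using assms by (rule sym_pd_quadratic_form_nonneg)
  also have "\<dots> = a \<bullet> (S *v a) + 2 * t * (a \<bullet> (S *v b)) + t\<^sup>2 * B"
    using bilinear_form_commute[OF sym, of b a]
    by (simp add: algebra_simps matrix_vector_mult_scaleR inner_add_left inner_add_right
        B_def power2_eq_square)
  also have "\<dots> = a \<bullet> (S *v a) - (a \<bullet> (S *v b))\<^sup>2 / B"
    using B by (simp add: t_def field_simps power2_eq_square)
  finally show ?thesis
    using B by (simp add: B_def field_simps)
qed

lemma sym_pd_matrix_inv:
  fixes S :: "real^'n^'n"
  assumes "sym_pd S"
  shows "matrix_inv S ** S = mat 1" and "S ** matrix_inv S = mat 1"
proof -
  have "\<forall>x. S *v x = 0 \<longrightarrow> x = 0"
    using assms unfolding sym_pd_def by fastforce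
  then have "\<exists>A. S ** A = mat 1 \<and> A ** S = mat 1"
    using matrix_left_invertible_ker invertible_left_inverse unfolding invertible_def by blast
  from someI_ex[OF this] show "matrix_inv S ** S = mat 1" and "S ** matrix_inv S = mat 1"
    unfolding matrix_inv_def by auto
qed

lemma sym_pd_matrix_inv_cancel:
  fixes S :: "real^'n^'n"
  assumes "sym_pd S"
  shows "matrix_inv S *v (S *v v) = v" and "S *v (matrix_inv S *v v) = v"
  by (simp_all add: matrix_vector_mul_assoc sym_pd_matrix_inv[OF assms])

lemma abs_inner_le_sqrt_inverse_form:
  fixes S :: "real^'n^'n"
  assumes "sym_pd S"
  shows "\<bar>y \<bullet> m\<bar> \<le> sqrt (m \<bullet> (matrix_inv S *v m)) * sqrt (y \<bullet> (S *v y))"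
proof -
  define w where "w = matrix_inv S *v m"
  have m: "m = S *v w"
    unfolding w_def by (simp add: sym_pd_matrix_inv_cancel[OF assms])
  have "(y \<bullet> m)\<^sup>2 \<le> (y \<bullet> (S *v y)) * (w \<bullet> (S *v w))"
    using sym_pd_cauchy_schwarz[OF assms, of y w] m by simp
  also have "w \<bullet> (S *v w) = m \<bullet> w"
    using m by (simp add: inner_commute)
  finally have "(y \<bullet> m)\<^sup>2 \<le> (m \<bullet> w) * (y \<bullet> (S *v y))"
    by (simp add: mult.commute)
  from real_sqrt_le_mono[OF this] show ?thesis
    unfolding w_def by (simp add: real_sqrt_mult)
qed

lemma inner_square_eq_double_sum:
  "((y::real^'n) \<bullet> s)\<^sup>2 = (\<Sum>i\<in>UNIV. \<Sum>j\<in>UNIV. y$i * y$j * (s$i * s$j))"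
  unfolding inner_vec_def power2_eq_square sum_product by (simp add: mult_ac)

lemma quadratic_form_rank_one:
  "(v::real^'n) \<bullet> ((\<chi> i j. e * (u$i * u$j)) *v v) = e * (v \<bullet> u)\<^sup>2"
  unfolding inner_square_eq_double_sum
  by (simp add: inner_vec_def matrix_vector_mult_def sum_distrib_left mult_ac)

lemma prob_dists_vec_projection:
  fixes y :: "real^'n"
  assumes "M \<in> prob_dists_vec"
  shows "integrable M (\<lambda>s. y \<bullet> s)"
    and "integral\<^sup>L M (\<lambda>s. y \<bullet> s) = y \<bullet> mean_vec M"
    and "integrable M (\<lambda>s. (y \<bullet> s)\<^sup>2)"
    and "integral\<^sup>L M (\<lambda>s. (y \<bullet> s)\<^sup>2) = y \<bullet> (second_moment M *v y)"
proof -
  have int1: "\<And>i. integrable M (\<lambda>x. x $ i)"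
    and int2: "\<And>i j. integrable M (\<lambda>x. x $ i * x $ j)"
    using assms unfolding prob_dists_vec_def by auto
  show "integrable M (\<lambda>s. y \<bullet> s)"
    unfolding inner_vec_def using int1 by auto
  show "integral\<^sup>L M (\<lambda>s. y \<bullet> s) = y \<bullet> mean_vec M"
    unfolding inner_vec_def using int1 by (simp add: mean_vec_def)
  show "integrable M (\<lambda>s. (y \<bullet> s)\<^sup>2)"
    unfolding inner_square_eq_double_sum using int2 by auto
  have "integral\<^sup>L M (\<lambda>s. \<Sum>i\<in>UNIV. \<Sum>j\<in>UNIV. y$i * y$j * (s$i * s$j))
      = (\<Sum>i\<in>UNIV. \<Sum>j\<in>UNIV. y$i * y$j * integral\<^sup>L M (\<lambda>s. s$i * s$j))"
    using int2 by simp
  also have "\<dots> = y \<bullet> (second_moment M *v y)"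
    unfolding inner_vec_def matrix_vector_mult_def second_moment_def
    by (simp add: sum_distrib_left mult_ac)
  finally show "integral\<^sup>L M (\<lambda>s. (y \<bullet> s)\<^sup>2) = y \<bullet> (second_moment M *v y)"
    by (simp only: inner_square_eq_double_sum)
qed

lemma distr_inner_in_D_xi:
  fixes S :: "real^'n^'n" and y :: "real^'n"
  assumes S: "sym_pd S" and M: "M \<in> D_s S g1 g2"
  shows "distr M borel (\<lambda>s. y \<bullet> s) \<in> D_xi S g1 g2 y"
proof -
  have Mv: "M \<in> prob_dists_vec"
    and mean: "mean_vec M \<bullet> (matrix_inv S *v mean_vec M) \<le> g1"
    and second: "loewner_le (second_moment M) (g2 *\<^sub>R S)"
    using M unfolding D_s_def by auto
  have sM: "sets M = sets borel"
    using Mv unfolding prob_dists_vec_def by simp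
  have meas: "(\<lambda>s. y \<bullet> s) \<in> borel_measurable M"
    unfolding measurable_cong_sets[OF sM refl]
    by (intro borel_measurable_continuous_onI continuous_intros)
  note proj = prob_dists_vec_projection[OF Mv, of y]
  have "\<bar>y \<bullet> mean_vec M\<bar>
      \<le> sqrt (mean_vec M \<bullet> (matrix_inv S *v mean_vec M)) * sqrt (y \<bullet> (S *v y))"
    by (rule abs_inner_le_sqrt_inverse_form[OF S])
  also have "\<dots> \<le> sqrt g1 * sqrt (y \<bullet> (S *v y))"
    using mean sym_pd_quadratic_form_nonneg[OF S, of y] by (intro mult_right_mono) auto
  finally have "\<bar>y \<bullet> mean_vec M\<bar> \<le> sqrt g1 * sqrt (y \<bullet> (S *v y))" .
  moreover have "y \<bullet> (second_moment M *v y) \<le> g2 * (y \<bullet> (S *v y))"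
    using second unfolding loewner_le_def
    by (drule_tac x=y in spec) (simp add: algebra_simps scaleR_matrix_vector_assoc[symmetric])
  moreover have "prob_space (distr M borel (\<lambda>s. y \<bullet> s))"
    using Mv meas unfolding prob_dists_vec_def by (blast intro: prob_space.prob_space_distr)
  moreover have "integrable (distr M borel (\<lambda>s. y \<bullet> s)) (\<lambda>x. x)"
    and "integrable (distr M borel (\<lambda>s. y \<bullet> s)) (\<lambda>x. x\<^sup>2)"
    using proj(1,3) by (simp_all add: integrable_distr_eq[OF meas])
  moreover have "integral\<^sup>L (distr M borel (\<lambda>s. y \<bullet> s)) (\<lambda>x. x) = y \<bullet> mean_vec M"
    and "integral\<^sup>L (distr M borel (\<lambda>s. y \<bullet> s)) (\<lambda>x. x\<^sup>2) = y \<bullet> (second_moment M *v y)"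
    using proj(2,4) by (simp_all add: integral_distr[OF meas])
  ultimately show ?thesis
    unfolding D_xi_def prob_dists_real_def by simp
qed

lemma measure_distr_inner:
  fixes y :: "real^'n" and f :: "real \<Rightarrow> real"
  assumes "sets M = sets borel" and "f \<in> borel_measurable borel"
  shows "measure (distr M borel (\<lambda>s. y \<bullet> s)) {x. f x \<le> 0} = measure M {s. f (y \<bullet> s) \<le> 0}"
proof -
  have "(\<lambda>s. y \<bullet> s) \<in> borel_measurable M"
    unfolding measurable_cong_sets[OF assms(1) refl]
    by (intro borel_measurable_continuous_onI continuous_intros)
  moreover have "{x. f x \<le> 0} \<in> sets borel"
    using assms(2) by measurable
  ultimately show ?thesis
    using sets_eq_imp_space_eq[OF assms(1)] by (subst measure_distr) auto
qed

lemma distr_scaleR_in_prob_dists_vec: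
  fixes u :: "real^'n"
  assumes "Q \<in> prob_dists_real"
  shows "distr Q borel (\<lambda>x. x *\<^sub>R u) \<in> prob_dists_vec"
    and "mean_vec (distr Q borel (\<lambda>x. x *\<^sub>R u)) = integral\<^sup>L Q (\<lambda>x. x) *\<^sub>R u"
    and "second_moment (distr Q borel (\<lambda>x. x *\<^sub>R u))
           = (\<chi> i j. integral\<^sup>L Q (\<lambda>x. x\<^sup>2) * (u$i * u$j))"
proof -
  have ps: "prob_space Q" and sQ: "sets Q = sets borel"
    and int1: "integrable Q (\<lambda>x. x)" and int2: "integrable Q (\<lambda>x. x\<^sup>2)"
    using assms unfolding prob_dists_real_def by auto
  have meas: "(\<lambda>x. x *\<^sub>R u) \<in> borel_measurable Q"
    unfolding measurable_cong_sets[OF sQ refl]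
    by (intro borel_measurable_continuous_onI continuous_intros)
  have coord: "(\<lambda>x. (x *\<^sub>R u) $ i) = (\<lambda>x. u$i * x)" for i
    by (auto simp: mult.commute)
  have coord2: "(\<lambda>x. (x *\<^sub>R u) $ i * (x *\<^sub>R u) $ j) = (\<lambda>x. (u$i * u$j) * x\<^sup>2)" for i j
    by (auto simp: power2_eq_square mult_ac)
  have meas1: "(\<lambda>v::real^'n. v $ i) \<in> borel_measurable borel" for i
    by (intro borel_measurable_continuous_onI continuous_intros)
  have meas2: "(\<lambda>v::real^'n. v $ i * v $ j) \<in> borel_measurable borel" for i j
    by (intro borel_measurable_continuous_onI continuous_intros)
  have "integrable (distr Q borel (\<lambda>x. x *\<^sub>R u)) (\<lambda>v. v $ i)" for i
    using integrable_mult_right[OF int1, of "u$i"]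
    unfolding integrable_distr_eq[OF meas meas1] coord .
  moreover have "integrable (distr Q borel (\<lambda>x. x *\<^sub>R u)) (\<lambda>v. v $ i * v $ j)" for i j
    using integrable_mult_right[OF int2, of "u$i * u$j"]
    unfolding integrable_distr_eq[OF meas meas2] coord2 .
  ultimately show "distr Q borel (\<lambda>x. x *\<^sub>R u) \<in> prob_dists_vec"
    unfolding prob_dists_vec_def using prob_space.prob_space_distr[OF ps meas] by simp
  show "mean_vec (distr Q borel (\<lambda>x. x *\<^sub>R u)) = integral\<^sup>L Q (\<lambda>x. x) *\<^sub>R u"
    unfolding mean_vec_def by (simp add: vec_eq_iff integral_distr[OF meas meas1] coord)
  show "second_moment (distr Q borel (\<lambda>x. x *\<^sub>R u))
      = (\<chi> i j. integral\<^sup>L Q (\<lambda>x. x\<^sup>2) * (u$i * u$j))"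
  proof -
    have "integral\<^sup>L (distr Q borel (\<lambda>x. x *\<^sub>R u)) (\<lambda>v. v $ i * v $ j)
        = integral\<^sup>L Q (\<lambda>x. x\<^sup>2) * (u$i * u$j)" for i j
      unfolding integral_distr[OF meas meas2] coord2 by (simp add: mult.commute)
    then show ?thesis
      unfolding second_moment_def by (simp add: vec_eq_iff)
  qed
qed

text \<open>
  Since \<open>x / 0 = 0\<close>, \<open>dual_direction S 0 = 0\<close>; this is harmless because for \<open>y = 0\<close>
  every law in \<open>D_xi\<close> is concentrated at \<open>0\<close>.
\<close>
definition dual_direction :: "real^'n^'n \<Rightarrow> real^'n \<Rightarrow> real^'n" where
  "dual_direction S y = (1 / (y \<bullet> (S *v y))) *\<^sub>R (S *v y)"

lemma inverse_form_scaleR_dual_direction: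
  fixes S :: "real^'n^'n" and y :: "real^'n"
  assumes S: "sym_pd S"
  shows "(a *\<^sub>R dual_direction S y) \<bullet> (matrix_inv S *v (a *\<^sub>R dual_direction S y))
           = a\<^sup>2 / (y \<bullet> (S *v y))"
  unfolding dual_direction_def
  by (simp add: matrix_vector_mult_scaleR sym_pd_matrix_inv_cancel[OF S] inner_commute
      power2_eq_square)

lemma rank_one_loewner_le:
  fixes S :: "real^'n^'n" and y :: "real^'n"
  assumes S: "sym_pd S" and "0 \<le> g" and e: "0 \<le> e" "e \<le> g * (y \<bullet> (S *v y))"
  shows "loewner_le (\<chi> i j. e * ((dual_direction S y)$i * (dual_direction S y)$j)) (g *\<^sub>R S)"
  unfolding loewner_le_def
proof
  fix v :: "real^'n"
  define q where "q = y \<bullet> (S *v y)"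
  have "e * (v \<bullet> dual_direction S y)\<^sup>2 \<le> g * (v \<bullet> (S *v v))"
  proof (cases "q = 0")
    case True
    then show ?thesis
      using \<open>0 \<le> g\<close> sym_pd_quadratic_form_nonneg[OF S, of v]
      by (simp add: dual_direction_def q_def)
  next
    case False
    then have q: "q > 0"
      using sym_pd_quadratic_form_nonneg[OF S, of y] unfolding q_def by simp
    have "e * (v \<bullet> dual_direction S y)\<^sup>2 = e / q\<^sup>2 * (v \<bullet> (S *v y))\<^sup>2"
      by (simp add: dual_direction_def q_def power_divide)
    also have "\<dots> \<le> e / q\<^sup>2 * ((v \<bullet> (S *v v)) * q)"
      using sym_pd_cauchy_schwarz[OF S, of v y] e by (intro mult_left_mono) (auto simp: q_def)
    also have "\<dots> = e / q * (v \<bullet> (S *v v))"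
      using q by (simp add: field_simps power2_eq_square)
    also have "\<dots> \<le> g * (v \<bullet> (S *v v))"
      using e q sym_pd_quadratic_form_nonneg[OF S, of v]
      by (intro mult_right_mono) (auto simp: q_def divide_le_eq)
    finally show ?thesis .
  qed
  then show "0 \<le> v \<bullet> ((g *\<^sub>R S
      - (\<chi> i j. e * ((dual_direction S y)$i * (dual_direction S y)$j))) *v v)"
    by (simp add: matrix_vector_mult_diff_rdistrib inner_diff_right quadratic_form_rank_one
        scaleR_matrix_vector_assoc[symmetric])
qed

lemma distr_scaleR_dual_direction_in_D_s:
  fixes S :: "real^'n^'n" and y :: "real^'n"
  assumes S: "sym_pd S" and "0 \<le> g1" "0 \<le> g2" and Q: "Q \<in> D_xi S g1 g2 y"
  shows "distr Q borel (\<lambda>x. x *\<^sub>R dual_direction S y) \<in> D_s S g1 g2"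
proof -
  define q where "q = y \<bullet> (S *v y)"
  have Qr: "Q \<in> prob_dists_real"
    and mean: "\<bar>integral\<^sup>L Q (\<lambda>x. x)\<bar> \<le> sqrt (g1 * q)"
    and second: "integral\<^sup>L Q (\<lambda>x. x\<^sup>2) \<le> g2 * q"
    using Q unfolding D_xi_def q_def by (auto simp: real_sqrt_mult)
  note moments = distr_scaleR_in_prob_dists_vec[OF Qr, of "dual_direction S y"]
  have "(integral\<^sup>L Q (\<lambda>x. x))\<^sup>2 \<le> g1 * q"
    using power_mono[OF mean, of 2] \<open>0 \<le> g1\<close> sym_pd_quadratic_form_nonneg[OF S, of y]
    by (simp add: q_def)
  then have "(integral\<^sup>L Q (\<lambda>x. x))\<^sup>2 / q \<le> g1"
    using \<open>0 \<le> g1\<close> sym_pd_quadratic_form_nonneg[OF S, of y]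
    by (cases "q = 0") (auto simp: q_def divide_le_eq)
  then have "mean_vec (distr Q borel (\<lambda>x. x *\<^sub>R dual_direction S y))
      \<bullet> (matrix_inv S *v mean_vec (distr Q borel (\<lambda>x. x *\<^sub>R dual_direction S y))) \<le> g1"
    unfolding moments(2) inverse_form_scaleR_dual_direction[OF S]
    by (simp add: q_def)
  moreover have "loewner_le (second_moment (distr Q borel (\<lambda>x. x *\<^sub>R dual_direction S y)))
      (g2 *\<^sub>R S)"
    unfolding moments(3)
    by (rule rank_one_loewner_le[OF S \<open>0 \<le> g2\<close> _ second[unfolded q_def]]) simp
  ultimately show ?thesis
    using moments(1) unfolding D_s_def by blast
qed

lemma D_xi_zero_direction_AE_zero:
  assumes "Q \<in> D_xi S g1 g2 0"
  shows "AE x in Q. x = 0"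
proof -
  have int: "integrable Q (\<lambda>x. x\<^sup>2)" and "integral\<^sup>L Q (\<lambda>x. x\<^sup>2) \<le> 0"
    using assms unfolding D_xi_def prob_dists_real_def by simp_all
  moreover have "0 \<le> integral\<^sup>L Q (\<lambda>x. x\<^sup>2)"
    by simp
  ultimately have "AE x in Q. x\<^sup>2 = 0"
    using integral_nonneg_eq_0_iff_AE[OF int] by simp
  then show ?thesis
    by eventually_elim simp
qed

lemma measure_distr_scaleR_dual_direction:
  fixes S :: "real^'n^'n" and y :: "real^'n" and f :: "real \<Rightarrow> real"
  assumes S: "sym_pd S" and Q: "Q \<in> D_xi S g1 g2 y" and f: "f \<in> borel_measurable borel"
  shows "measure (distr Q borel (\<lambda>x. x *\<^sub>R dual_direction S y)) {s. f (y \<bullet> s) \<le> 0}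
           = measure Q {x. f x \<le> 0}"
proof -
  have sQ: "sets Q = sets borel"
    using Q unfolding D_xi_def prob_dists_real_def by simp
  have meas: "(\<lambda>x. x *\<^sub>R dual_direction S y) \<in> borel_measurable Q"
    unfolding measurable_cong_sets[OF sQ refl]
    by (intro borel_measurable_continuous_onI continuous_intros)
  have "measure (distr Q borel (\<lambda>x. x *\<^sub>R dual_direction S y)) {s. f (y \<bullet> s) \<le> 0}
      = measure Q {x. f (x * (y \<bullet> dual_direction S y)) \<le> 0}"
    using f sets_eq_imp_space_eq[OF sQ] by (subst measure_distr[OF meas]) auto
  also have "\<dots> = measure Q {x. f x \<le> 0}"
  proof (cases "y = 0")
    case False
    then have "y \<bullet> dual_direction S y = 1"
      using sym_pd_quadratic_form_eq_0_iff[OF S] by (simp add: dual_direction_def)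
    then show ?thesis by simp
  next
    case True
    then have "AE x in Q. x = 0"
      using D_xi_zero_direction_AE_zero Q by blast
    then have "AE x in Q. x \<in> {x. f (x * (y \<bullet> dual_direction S y)) \<le> 0}
        \<longleftrightarrow> x \<in> {x. f x \<le> 0}"
      by eventually_elim (simp add: \<open>y = 0\<close>)
    moreover have "{x. f (x * (y \<bullet> dual_direction S y)) \<le> 0} \<in> sets Q"
      and "{x. f x \<le> 0} \<in> sets Q"
      using f unfolding sQ by measurable
    ultimately show ?thesis
      by (rule measure_eq_AE)
  qed
  finally show ?thesis .
qed

lemma D_xi_attains_D_s_value:
  fixes S :: "real^'n^'n" and y :: "real^'n" and f :: "real \<Rightarrow> real"
  assumes "sym_pd S" and "M \<in> D_s S g1 g2" and "f \<in> borel_measurable borel"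
  shows "\<exists>Q\<in>D_xi S g1 g2 y. measure Q {x. f x \<le> 0} = measure M {s. f (y \<bullet> s) \<le> 0}"
proof -
  have "sets M = sets borel"
    using assms(2) unfolding D_s_def prob_dists_vec_def by simp
  then show ?thesis
    using distr_inner_in_D_xi[OF assms(1,2)] measure_distr_inner[OF _ assms(3)] by blast
qed

lemma D_s_attains_D_xi_value:
  fixes S :: "real^'n^'n" and y :: "real^'n" and f :: "real \<Rightarrow> real"
  assumes "sym_pd S" and "0 \<le> g1" and "0 \<le> g2" and "Q \<in> D_xi S g1 g2 y"
    and "f \<in> borel_measurable borel"
  shows "\<exists>M\<in>D_s S g1 g2. measure M {s. f (y \<bullet> s) \<le> 0} = measure Q {x. f x \<le> 0}"
  using distr_scaleR_dual_direction_in_D_s[OF assms(1-4)]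
    measure_distr_scaleR_dual_direction[OF assms(1,4,5)] by blast

theorem lemma1:
  fixes S :: "real^'n^'n" and g1 g2 :: real and y :: "real^'n" and f :: "real \<Rightarrow> real"
  assumes "sym_pd S" and "g1 > 0" and "g2 > 0"
    and "f \<in> borel_measurable borel"
  shows "(INF M \<in> D_s S g1 g2. measure M {s. f (y \<bullet> s) \<le> 0})
       = (INF M \<in> D_xi S g1 g2 y. measure M {x. f x \<le> 0})"
proof -
  let ?P = "\<lambda>M. measure M {s. f (y \<bullet> s) \<le> 0}" and ?Q = "\<lambda>Q. measure Q {x. f x \<le> 0}"
  have "?P ` D_s S g1 g2 \<subseteq> ?Q ` D_xi S g1 g2 y"
  proof (rule image_subsetI)
    fix M assume "M \<in> D_s S g1 g2"
    then obtain Q where "Q \<in> D_xi S g1 g2 y" and "?Q Q = ?P M"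
      using D_xi_attains_D_s_value[OF assms(1) _ assms(4)] by blast
    then show "?P M \<in> ?Q ` D_xi S g1 g2 y"
      by (auto intro!: image_eqI[where x=Q])
  qed
  moreover have "?Q ` D_xi S g1 g2 y \<subseteq> ?P ` D_s S g1 g2"
  proof (rule image_subsetI)
    fix Q assume "Q \<in> D_xi S g1 g2 y"
    then obtain M where "M \<in> D_s S g1 g2" and "?P M = ?Q Q"
      using D_s_attains_D_xi_value[OF assms(1) less_imp_le[OF assms(2)] less_imp_le[OF assms(3)]
          _ assms(4)] by blast
    then show "?Q Q \<in> ?P ` D_s S g1 g2"
      by (auto intro!: image_eqI[where x=M])
  qed
  ultimately have "?P ` D_s S g1 g2 = ?Q ` D_xi S g1 g2 y"
    by (rule subset_antisym)
  then show ?thesis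
    by simp
qed

end
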